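(* Let $G$ be a probability distribution on $\mathbb{R}^d$, let $w\ge 1$ and $T\ge 1$ be integers, set $\psi = 2^w$ and $L = Tw$. For $t=1,\dots,T$, let $\mathcal{D}^t=(\mathbf{s}^t_1,\dots,\mathbf{s}^t_\psi)$ be drawn i.i.d. from $G$, independently across $t$. For $\mathbf{x}\in\mathbb{R}^d$ define the hash functions $h^t_i(\mathbf{x}) = 1$ if $\mathbf{s}^t_i$ is the nearest point of $\mathcal{D}^t$ to $\mathbf{x}$ in Euclidean distance and $h^t_i(\mathbf{x})=0$ otherwise, where ties are broken by assigning $\mathbf{x}$ to one of the nearest points chosen uniformly at random (independently of everything else), so exactly one $h^t_i(\mathbf{x})$ equals $1$; let $i_t(\mathbf{x})$ denote that index. Define the encoded bits $$e^t_j(\mathbf{x}) = \left\lfloor \frac{i_t(\mathbf{x})}{2^{j-1}} \right\rfloor \bmod 2, \qquad j=1,\dots,w,$$ the $w$-bit vector $b^t(\mathbf{x}) = [e^t_1(\mathbf{x}),\dots,e^t_w(\mathbf{x})]$, and the $L$-bit code $\mathcal{B}(\mathbf{x}) = [b^1(\mathbf{x}),\dots,b^T(\mathbf{x})]$. Then for every fixed $\mathbf{x}\in\mathbb{R}^d$, the $L$ bits of $\mathcal{B}(\mathbf{x})$, viewed as random variables over the draws of $\mathcal{D}^1,\dots,\mathcal{D}^T$ (and tie-breaking), are mutually independent: for all values $v_1,\dots,v_L\in\{0,1\}$, the probability that the bits equal $v_1,\dots,v_L$ equals the product of the individual probabilities that each bit takes its value.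
   Context: This is the Voronoi Diagram Encoded Hashing (VDeH) scheme: each of the $T=L/w$ independently sampled Voronoi diagrams with $\psi=2^w$ cells is turned into $w$ bits by binary-encoding the index of the cell containing $\mathbf{x}$, and the $T$ resulting $w$-bit blocks are concatenated. *)

theory Defs
  imports "HOL-Probability.Probability"
begin

definition nearest_set :: "nat \<Rightarrow> 'a::metric_space \<Rightarrow> (nat \<Rightarrow> 'a) \<Rightarrow> nat set" where
  "nearest_set psi x S = {i \<in> {1..psi}. \<forall>k\<in>{1..psi}. dist x (S i) \<le> dist x (S k)}"

text \<open>Uniform tie-breaking: a uniformly random permutation sigma of {1..psi}
  (independent of everything else) ranks the indices, and x is assigned to the
  nearest sample point of smallest rank; this is uniform over the nearest points.\<close>
definition vd_index :: "nat \<Rightarrow> 'a::metric_space \<Rightarrow> (nat \<Rightarrow> 'a) \<Rightarrow> (nat \<Rightarrow> nat) \<Rightarrow> nat" where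
  "vd_index psi x S \<sigma> =
     (THE i. i \<in> nearest_set psi x S \<and> \<sigma> i = Min (\<sigma> ` nearest_set psi x S))"

definition enc_bit :: "nat \<Rightarrow> nat \<Rightarrow> nat" where
  "enc_bit i j = (i div 2 ^ (j - 1)) mod 2"

definition block_space :: "'a measure \<Rightarrow> nat \<Rightarrow> ((nat \<Rightarrow> 'a) \<times> (nat \<Rightarrow> nat)) measure" where
  "block_space G psi =
     (PiM {1..psi} (\<lambda>_. G)) \<Otimes>\<^sub>M measure_pmf (pmf_of_set {\<sigma>. \<sigma> permutes {1..psi}})"

definition vdeh_space :: "'a measure \<Rightarrow> nat \<Rightarrow> nat \<Rightarrow> (nat \<Rightarrow> (nat \<Rightarrow> 'a) \<times> (nat \<Rightarrow> nat)) measure" where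
  "vdeh_space G w T = PiM {..<T} (\<lambda>_. block_space G (2 ^ w))"

text \<open>Bit number l (0-based, l < T*w) of the code B(x): it is bit e^t_j with
  t = l div w (0-based block) and j = l mod w + 1.\<close>
definition vdeh_bit :: "nat \<Rightarrow> 'a::metric_space \<Rightarrow> (nat \<Rightarrow> (nat \<Rightarrow> 'a) \<times> (nat \<Rightarrow> nat)) \<Rightarrow> nat \<Rightarrow> nat" where
  "vdeh_bit w x \<omega> l =
     enc_bit (vd_index (2 ^ w) x (fst (\<omega> (l div w))) (snd (\<omega> (l div w)))) (l mod w + 1)"

end

(* For a fixed x, relabelling the sample points of one diagram by a permutation pi of
   {1..psi} (and composing the tie-breaking ranks with pi) preserves the distribution of
   the diagram, because the samples are i.i.d. and the ranks uniform; it moves the index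
   of the cell containing x by pi^-1. Hence this index is uniform on {1..psi}. As
   psi = 2^w and i |-> i mod 2^w maps {1..2^w} bijectively onto {0..<2^w}, the w encoded
   bits of a uniform index are independent fair bits, and since the T diagrams are
   independent, every pattern of the L = T w bits has probability 2^-L, the product of
   the marginals 1/2. *)
theory Submission
  imports Defs
begin

section \<open>Bit patterns of cell indices\<close>

lemma card_split_lowest_bit:
  "card {i::nat. i < 2 * N \<and> Q (odd i) \<and> P (i div 2)} = card {r. Q r} * card {m. m < N \<and> P m}"
proof -
  have "bij_betw (\<lambda>(r, m). 2 * m + of_bool r) ({r. Q r} \<times> {m. m < N \<and> P m})
      {i::nat. i < 2 * N \<and> Q (odd i) \<and> P (i div 2)}"
    by (rule bij_betwI[where g = "\<lambda>i. (odd i, i div 2)"]) auto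
  then show ?thesis
    by (simp add: bij_betw_same_card[symmetric] card_cartesian_product)
qed

lemma ball_bit_eq_iff:
  fixes i :: nat
  shows "(\<forall>k\<in>K. bit i k = b k) \<longleftrightarrow>
    (0 \<in> K \<longrightarrow> odd i = b 0) \<and> (\<forall>k\<in>Suc -` K. bit (i div 2) k = b (Suc k))"
proof
  assume all: "\<forall>k\<in>K. bit i k = b k"
  have "0 \<in> K \<longrightarrow> odd i = b 0" using all by (metis bit_0)
  moreover have "\<forall>k\<in>Suc -` K. bit (i div 2) k = b (Suc k)" using all by (auto simp flip: bit_Suc)
  ultimately show "(0 \<in> K \<longrightarrow> odd i = b 0) \<and> (\<forall>k\<in>Suc -` K. bit (i div 2) k = b (Suc k))" ..
next
  assume low: "(0 \<in> K \<longrightarrow> odd i = b 0) \<and> (\<forall>k\<in>Suc -` K. bit (i div 2) k = b (Suc k))"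
  show "\<forall>k\<in>K. bit i k = b k"
  proof
    fix k assume "k \<in> K"
    with low show "bit i k = b k" by (cases k) (simp_all add: bit_0 bit_Suc)
  qed
qed

lemma card_bits_fixed:
  assumes "K \<subseteq> {..<w}"
  shows "card {i::nat. i < 2 ^ w \<and> (\<forall>k\<in>K. bit i k = b k)} = 2 ^ (w - card K)"
  using assms
proof (induction w arbitrary: K b)
  case 0
  then show ?case by simp
next
  case (Suc w)
  define K' where "K' = Suc -` K"
  have K': "K' \<subseteq> {..<w}" using Suc.prems by (auto simp: K'_def)
  have K_eq: "K = Suc ` K' \<union> (K \<inter> {0})"
  proof (intro set_eqI iffI)
    fix k assume "k \<in> K"
    then show "k \<in> Suc ` K' \<union> (K \<inter> {0})" by (cases k) (auto simp: K'_def)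
  qed (auto simp: K'_def)
  have card_K: "card K = card K' + card (K \<inter> {0})"
    using K' finite_subset[OF K'] by (subst K_eq, subst card_Un_disjoint) (auto simp: card_image)
  have "card {i::nat. i < 2 ^ Suc w \<and> (\<forall>k\<in>K. bit i k = b k)}
      = card {r. 0 \<in> K \<longrightarrow> r = b 0} * 2 ^ (w - card K')"
    using card_split_lowest_bit[of "2 ^ w" "\<lambda>r. 0 \<in> K \<longrightarrow> r = b 0"
        "\<lambda>m. \<forall>k\<in>K'. bit m k = b (Suc k)"] Suc.IH[OF K', of "\<lambda>k. b (Suc k)"]
    by (simp add: ball_bit_eq_iff[of K, folded K'_def])
  also have "\<dots> = 2 ^ (Suc w - card K)"
    using card_K card_mono[OF _ K']
    by (cases "0 \<in> K") (auto simp: UNIV_bool card_insert_if Suc_diff_le)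
  finally show ?case .
qed

lemma enc_bit_Suc: "enc_bit i (Suc k) = of_bool (bit i k)"
  unfolding enc_bit_def by (simp add: bit_iff_odd flip: of_bool_odd_eq_mod_2)

lemma enc_bit_mod_power: "k < w \<Longrightarrow> enc_bit (i mod 2 ^ w) (Suc k) = enc_bit i (Suc k)"
  by (simp only: enc_bit_Suc flip: take_bit_eq_mod) (simp add: bit_take_bit_iff)

lemma enc_bit_Suc_eq_iff: "c \<in> {0, 1} \<Longrightarrow> enc_bit i (Suc k) = c \<longleftrightarrow> bit i k = (c = 1)"
  by (auto simp: enc_bit_Suc)

lemma bij_betw_mod_atLeastAtMost:
  assumes "0 < (n::nat)"
  shows "bij_betw (\<lambda>i. i mod n) {1..n} {..<n}"
proof (rule bij_betwI[where g = "\<lambda>m. if m = 0 then n else m"])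
  fix i assume "i \<in> {1..n}"
  then show "(if i mod n = 0 then n else i mod n) = i"
    by (cases "i = n") auto
next
  fix m assume "m \<in> {..<n}"
  then show "(if m = 0 then n else m) mod n = m" by simp
qed (use assms in \<open>auto simp: Suc_leI\<close>)

text \<open>Cell indices run over {1..2^w}: the index 2^w carries the same w low bits as 0.\<close>

lemma card_enc_bits_fixed:
  assumes "K \<subseteq> {..<w}" and "\<forall>k\<in>K. c k \<in> {0, 1}"
  shows "card {i \<in> {1..2 ^ w}. \<forall>k\<in>K. enc_bit i (Suc k) = c k} = 2 ^ (w - card K)"
proof -
  let ?P = "\<lambda>i. \<forall>k\<in>K. enc_bit i (Suc k) = c k"
  have "?P (i mod 2 ^ w) \<longleftrightarrow> ?P i" for i
    using assms(1) enc_bit_mod_power[of _ w i] by (metis lessThan_iff subsetD)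
  then have "bij_betw (\<lambda>i. i mod 2 ^ w) {i \<in> {1..2 ^ w}. ?P i} {i \<in> {..<2 ^ w}. ?P i}"
    by (intro bij_betw_Collect bij_betw_mod_atLeastAtMost) simp_all
  then have "card {i \<in> {1..2 ^ w}. ?P i} = card {i \<in> {..<2 ^ w}. ?P i}"
    by (rule bij_betw_same_card)
  also have "{i \<in> {..<2 ^ w}. ?P i} = {i. i < 2 ^ w \<and> (\<forall>k\<in>K. bit i k = (c k = 1))}"
    using assms(2) enc_bit_Suc_eq_iff by blast
  finally show ?thesis
    using card_bits_fixed[OF assms(1)] by simp
qed

section \<open>Nearest sample point with tie-breaking by rank\<close>

definition rank_min :: "'a set \<Rightarrow> ('a \<Rightarrow> 'b::linorder) \<Rightarrow> 'a" where
  "rank_min A \<sigma> = (THE i. i \<in> A \<and> \<sigma> i = Min (\<sigma> ` A))"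

lemma rank_min_unique:
  assumes "finite A" "A \<noteq> {}" "inj_on \<sigma> A"
  shows "\<exists>!i. i \<in> A \<and> \<sigma> i = Min (\<sigma> ` A)"
proof -
  have "Min (\<sigma> ` A) \<in> \<sigma> ` A" using assms(1,2) by (intro Min_in) auto
  then obtain i where "i \<in> A" "\<sigma> i = Min (\<sigma> ` A)" by auto
  moreover have "j = i" if "j \<in> A" "\<sigma> j = Min (\<sigma> ` A)" for j
    using inj_onD[OF assms(3)] that \<open>i \<in> A\<close> \<open>\<sigma> i = Min (\<sigma> ` A)\<close> by metis
  ultimately show ?thesis by blast
qed

lemma rank_min:
  assumes "finite A" "A \<noteq> {}" "inj_on \<sigma> A"
  shows "rank_min A \<sigma> \<in> A" and "\<sigma> (rank_min A \<sigma>) = Min (\<sigma> ` A)"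
  using theI'[OF rank_min_unique[OF assms]] by (simp_all add: rank_min_def)

lemma rank_min_eqI:
  assumes "finite A" "inj_on \<sigma> A" "i \<in> A" "\<sigma> i = Min (\<sigma> ` A)"
  shows "rank_min A \<sigma> = i"
  unfolding rank_min_def using assms by (intro the1_equality rank_min_unique) auto

lemma rank_min_vimage:
  assumes "bij \<pi>" "finite A" "A \<noteq> {}" "inj_on \<sigma> A"
  shows "\<pi> (rank_min (\<pi> -` A) (\<sigma> \<circ> \<pi>)) = rank_min A \<sigma>"
proof -
  let ?i = "rank_min A \<sigma>"
  have surj: "\<pi> ` (\<pi> -` A) = A" using assms(1) by (simp add: bij_is_surj)
  have "rank_min (\<pi> -` A) (\<sigma> \<circ> \<pi>) = inv \<pi> ?i"
  proof (rule rank_min_eqI)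
    show "finite (\<pi> -` A)" using assms(1,2) by (simp add: bij_is_inj finite_vimageI)
    show "inj_on (\<sigma> \<circ> \<pi>) (\<pi> -` A)"
      by (intro comp_inj_on inj_on_subset[OF bij_is_inj[OF assms(1)]])
        (simp_all add: assms(4) bij_is_surj[OF assms(1)])
    show "inv \<pi> ?i \<in> \<pi> -` A"
      using rank_min(1)[OF assms(2-4)] by (simp add: surj_f_inv_f[OF bij_is_surj[OF assms(1)]])
    have "(\<sigma> \<circ> \<pi>) ` (\<pi> -` A) = \<sigma> ` A" by (metis image_comp surj)
    then show "(\<sigma> \<circ> \<pi>) (inv \<pi> ?i) = Min ((\<sigma> \<circ> \<pi>) ` (\<pi> -` A))"
      using rank_min(2)[OF assms(2-4)] by (simp add: surj_f_inv_f[OF bij_is_surj[OF assms(1)]])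
  qed
  then show ?thesis by (simp add: surj_f_inv_f[OF bij_is_surj[OF assms(1)]])
qed

lemma vd_index_eq_rank_min: "vd_index n x S \<sigma> = rank_min (nearest_set n x S) \<sigma>"
  by (simp add: vd_index_def rank_min_def)

lemma nearest_set_subset: "nearest_set n x S \<subseteq> {1..n}"
  by (auto simp: nearest_set_def)

lemma nearest_set_nonempty:
  assumes "1 \<le> n"
  shows "nearest_set n x S \<noteq> {}"
proof -
  let ?d = "\<lambda>i. dist x (S i)"
  have "Min (?d ` {1..n}) \<in> ?d ` {1..n}" using assms by (intro Min_in) auto
  then obtain i where "i \<in> {1..n}" "?d i = Min (?d ` {1..n})" by auto
  then show ?thesis by (auto simp: nearest_set_def)
qed

lemma vd_index_in:
  assumes "1 \<le> n" "inj_on \<sigma> {1..n}"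
  shows "vd_index n x S \<sigma> \<in> {1..n}"
proof -
  have "vd_index n x S \<sigma> \<in> nearest_set n x S"
    unfolding vd_index_eq_rank_min
    by (rule rank_min(1)[OF finite_subset[OF nearest_set_subset] nearest_set_nonempty[OF assms(1)]
          inj_on_subset[OF assms(2) nearest_set_subset]]) simp
  then show ?thesis using nearest_set_subset by blast
qed

lemma nearest_set_reindex:
  assumes "\<pi> permutes {1..n}"
  shows "nearest_set n x (\<lambda>i\<in>{1..n}. S (\<pi> i)) = \<pi> -` nearest_set n x S"
proof -
  have "(\<forall>k\<in>{1..n}. dist x (S (\<pi> i)) \<le> dist x (S (\<pi> k)))
      \<longleftrightarrow> (\<forall>k\<in>{1..n}. dist x (S (\<pi> i)) \<le> dist x (S k))" for i
    using bij_betw_ball[OF permutes_imp_bij[OF assms], of "\<lambda>k. dist x (S (\<pi> i)) \<le> dist x (S k)"]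
    by simp
  then show ?thesis
    using permutes_in_image[OF assms] by (auto simp: nearest_set_def)
qed

lemma vd_index_reindex:
  assumes "1 \<le> n" "inj_on \<sigma> {1..n}" "\<pi> permutes {1..n}"
  shows "\<pi> (vd_index n x (\<lambda>i\<in>{1..n}. S (\<pi> i)) (\<sigma> \<circ> \<pi>)) = vd_index n x S \<sigma>"
  unfolding vd_index_eq_rank_min nearest_set_reindex[OF assms(3)]
  by (rule rank_min_vimage[OF permutes_bij[OF assms(3)] finite_subset[OF nearest_set_subset]
        nearest_set_nonempty[OF assms(1)] inj_on_subset[OF assms(2) nearest_set_subset]]) simp

section \<open>Uniformity of the cell index\<close>

locale voronoi_block =
  fixes G :: "'a::{second_countable_topology, metric_space} measure" and n :: nat and x :: 'a
  assumes prob_space_G: "prob_space G" and sets_G: "sets G = sets borel" and n_pos: "1 \<le> n"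
begin

abbreviation samples :: "(nat \<Rightarrow> 'a) measure" where
  "samples \<equiv> PiM {1..n} (\<lambda>_. G)"

abbreviation ranks :: "(nat \<Rightarrow> nat) measure" where
  "ranks \<equiv> measure_pmf (pmf_of_set {\<sigma>. \<sigma> permutes {1..n}})"

abbreviation cell :: "(nat \<Rightarrow> 'a) \<times> (nat \<Rightarrow> nat) \<Rightarrow> nat" where
  "cell \<omega> \<equiv> vd_index n x (fst \<omega>) (snd \<omega>)"

abbreviation cell_event :: "nat set \<Rightarrow> ((nat \<Rightarrow> 'a) \<times> (nat \<Rightarrow> nat)) set" where
  "cell_event B \<equiv> {\<omega> \<in> space (block_space G n). cell \<omega> \<in> B}"

lemma block_space_eq: "block_space G n = samples \<Otimes>\<^sub>M ranks"
  by (simp add: block_space_def)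

lemma finite_permutations_atLeastAtMost: "finite {\<sigma>. \<sigma> permutes {1..n}}"
  and permutations_atLeastAtMost_nonempty: "{\<sigma>. \<sigma> permutes {1..n}} \<noteq> {}"
  by (auto simp: finite_permutations intro: permutes_id)

lemma prob_space_samples: "prob_space samples"
  using prob_space_G by (intro prob_space_PiM) auto

lemma prob_space_block_space: "prob_space (block_space G n)"
  unfolding block_space_eq
  by (intro prob_space_pair prob_space_samples prob_space_measure_pmf)

lemma space_block_space: "space (block_space G n) = space samples \<times> UNIV"
  by (simp add: block_space_eq space_pair_measure)

lemma measurable_sample_dist[measurable]: "(\<lambda>S. dist x (S i)) \<in> borel_measurable samples"
proof -
  have "(\<lambda>S. S i) \<in> borel_measurable samples"
  proof (cases "i \<in> {1..n}")
    case True
    then show ?thesis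
      using measurable_component_singleton[OF True] measurable_cong_sets[OF refl sets_G] by blast
  next
    case False
    then have "\<forall>S\<in>space samples. S i = undefined"
      by (auto simp: space_PiM PiE_def extensional_def)
    then show ?thesis using measurable_cong[of samples "\<lambda>S. S i" "\<lambda>S. undefined"] by simp
  qed
  then show ?thesis by measurable
qed

lemma pred_sample_dist_le[measurable]:
  "Measurable.pred samples (\<lambda>S. dist x (S i) \<le> dist x (S k))"
  unfolding pred_def by (intro borel_measurable_le measurable_sample_dist)

lemma sets_nearest_set_eq:
  assumes "A \<subseteq> {1..n}"
  shows "{S \<in> space samples. nearest_set n x S = A} \<in> sets samples"
proof -
  have "{S \<in> space samples. nearest_set n x S = A} =
     {S \<in> space samples. (\<forall>i\<in>A. \<forall>k\<in>{1..n}. dist x (S i) \<le> dist x (S k)) \<and>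
        (\<forall>i\<in>{1..n} - A. \<not> (\<forall>k\<in>{1..n}. dist x (S i) \<le> dist x (S k)))}"
    using assms by (auto simp: nearest_set_def)
  also have "\<dots> \<in> sets samples"
    using finite_subset[OF assms] by measurable
  finally show ?thesis .
qed

lemma sets_cell_event: "cell_event B \<in> sets (block_space G n)"
proof -
  \<comment> \<open>The cell depends on the samples only through their nearest set, a subset of {1..n}.\<close>
  have "cell_event B =
      (\<Union>A\<in>Pow {1..n}. {S \<in> space samples. nearest_set n x S = A} \<times> {\<sigma>. rank_min A \<sigma> \<in> B})"
  proof (intro set_eqI iffI)
    fix \<omega> assume "\<omega> \<in> cell_event B"
    then have "fst \<omega> \<in> space samples" "rank_min (nearest_set n x (fst \<omega>)) (snd \<omega>) \<in> B"
      by (auto simp: space_block_space vd_index_eq_rank_min)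
    moreover have "nearest_set n x (fst \<omega>) \<in> Pow {1..n}" using nearest_set_subset by blast
    ultimately show "\<omega> \<in> (\<Union>A\<in>Pow {1..n}.
        {S \<in> space samples. nearest_set n x S = A} \<times> {\<sigma>. rank_min A \<sigma> \<in> B})"
      by (intro UN_I[of "nearest_set n x (fst \<omega>)"]) (auto simp: mem_Times_iff)
  next
    fix \<omega> :: "(nat \<Rightarrow> 'a) \<times> (nat \<Rightarrow> nat)"
    assume "\<omega> \<in> (\<Union>A\<in>Pow {1..n}. {S \<in> space samples. nearest_set n x S = A} \<times> {\<sigma>. rank_min A \<sigma> \<in> B})"
    then obtain A where
      "fst \<omega> \<in> space samples" "nearest_set n x (fst \<omega>) = A" "rank_min A (snd \<omega>) \<in> B"
      by (auto simp: mem_Times_iff)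
    then show "\<omega> \<in> cell_event B"
      by (simp add: space_block_space vd_index_eq_rank_min mem_Times_iff)
  qed
  also have "\<dots> \<in> sets (block_space G n)"
    unfolding block_space_eq
    by (intro sets.finite_UN pair_measureI sets_nearest_set_eq) auto
  finally show ?thesis .
qed

abbreviation permute_samples :: "(nat \<Rightarrow> nat) \<Rightarrow> (nat \<Rightarrow> 'a) \<Rightarrow> nat \<Rightarrow> 'a" where
  "permute_samples \<pi> S \<equiv> \<lambda>i\<in>{1..n}. S (\<pi> i)"

abbreviation permute_block ::
    "(nat \<Rightarrow> nat) \<Rightarrow> (nat \<Rightarrow> 'a) \<times> (nat \<Rightarrow> nat) \<Rightarrow> (nat \<Rightarrow> 'a) \<times> (nat \<Rightarrow> nat)" where
  "permute_block \<pi> \<omega> \<equiv> (permute_samples \<pi> (fst \<omega>), snd \<omega> \<circ> \<pi>)"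

lemma measurable_permute_samples:
  assumes "\<pi> permutes {1..n}"
  shows "permute_samples \<pi> \<in> samples \<rightarrow>\<^sub>M samples"
proof (rule measurable_restrict)
  fix i :: nat assume "i \<in> {1..n}"
  then have "\<pi> i \<in> {1..n}" by (simp only: permutes_in_image[OF assms])
  then show "(\<lambda>S. S (\<pi> i)) \<in> samples \<rightarrow>\<^sub>M G" by (rule measurable_component_singleton)
qed

lemma distr_permute_samples:
  assumes "\<pi> permutes {1..n}"
  shows "distr samples samples (permute_samples \<pi>) = samples"
  using distr_PiM_reindex[of "{1..n}" "\<lambda>_. G" \<pi> "{1..n}"] prob_space_G
    permutes_inj_on[OF assms] permutes_in_image[OF assms]
  by (simp add: Pi_iff)

lemma distr_permute_ranks:
  assumes "\<pi> permutes {1..n}"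
  shows "distr ranks ranks (\<lambda>\<sigma>. \<sigma> \<circ> \<pi>) = ranks"
proof -
  have inj: "inj_on (\<lambda>\<sigma>. \<sigma> \<circ> \<pi>) {\<sigma>. \<sigma> permutes {1..n}}"
  proof (rule inj_onI)
    fix \<sigma> \<tau> :: "nat \<Rightarrow> nat" assume "\<sigma> \<circ> \<pi> = \<tau> \<circ> \<pi>"
    then have "(\<sigma> \<circ> \<pi>) \<circ> inv \<pi> = (\<tau> \<circ> \<pi>) \<circ> inv \<pi>" by simp
    then show "\<sigma> = \<tau>" by (simp add: comp_assoc permutes_inv_o(1)[OF assms])
  qed
  have img: "(\<lambda>\<sigma>. \<sigma> \<circ> \<pi>) ` {\<sigma>. \<sigma> permutes {1..n}} = {\<sigma>. \<sigma> permutes {1..n}}"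
  proof (intro equalityI subsetI)
    fix \<tau> assume "\<tau> \<in> {\<sigma>. \<sigma> permutes {1..n}}"
    then have "\<tau> \<circ> inv \<pi> permutes {1..n}"
      using assms by (auto intro: permutes_compose permutes_inv)
    moreover have "\<tau> = (\<tau> \<circ> inv \<pi>) \<circ> \<pi>"
      by (simp add: comp_assoc permutes_inv_o(2)[OF assms])
    ultimately show "\<tau> \<in> (\<lambda>\<sigma>. \<sigma> \<circ> \<pi>) ` {\<sigma>. \<sigma> permutes {1..n}}" by blast
  qed (use assms in \<open>auto intro: permutes_compose\<close>)
  have "distr ranks ranks (\<lambda>\<sigma>. \<sigma> \<circ> \<pi>) = distr ranks (count_space UNIV) (\<lambda>\<sigma>. \<sigma> \<circ> \<pi>)"
    by (rule distr_cong) auto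
  also have "\<dots> = map_pmf (\<lambda>\<sigma>. \<sigma> \<circ> \<pi>) (pmf_of_set {\<sigma>. \<sigma> permutes {1..n}})"
    by (simp add: map_pmf_rep_eq)
  also have "\<dots> = pmf_of_set {\<sigma>. \<sigma> permutes {1..n}}"
    unfolding map_pmf_of_set_inj[OF inj permutations_atLeastAtMost_nonempty
        finite_permutations_atLeastAtMost] img ..
  finally show ?thesis .
qed

lemma measurable_permute_block:
  assumes "\<pi> permutes {1..n}"
  shows "permute_block \<pi> \<in> block_space G n \<rightarrow>\<^sub>M block_space G n"
  unfolding block_space_eq
  by (rule measurable_Pair[OF
        measurable_compose[OF measurable_fst measurable_permute_samples[OF assms]]
        measurable_compose[OF measurable_snd]]) simp

lemma distr_permute_block:
  assumes "\<pi> permutes {1..n}"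
  shows "distr (block_space G n) (block_space G n) (permute_block \<pi>) = block_space G n"
proof -
  have meas_ranks: "(\<lambda>\<sigma>. \<sigma> \<circ> \<pi>) \<in> ranks \<rightarrow>\<^sub>M ranks" by simp
  have sigma_finite: "sigma_finite_measure (distr ranks ranks (\<lambda>\<sigma>. \<sigma> \<circ> \<pi>))"
    unfolding distr_permute_ranks[OF assms]
    by (intro prob_space_imp_sigma_finite prob_space_measure_pmf)
  have split: "(\<lambda>(S, \<sigma>). (permute_samples \<pi> S, \<sigma> \<circ> \<pi>)) = permute_block \<pi>"
    by (simp add: fun_eq_iff)
  show ?thesis
    using pair_measure_distr[OF measurable_permute_samples[OF assms] meas_ranks sigma_finite]
    unfolding split distr_permute_samples[OF assms] distr_permute_ranks[OF assms] block_space_eq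
    by (rule sym)
qed

text \<open>The rank component ranges over all functions \<^typ>\<open>nat \<Rightarrow> nat\<close>; only almost surely is
  it a permutation, which is what makes the choice in \<^const>\<open>vd_index\<close> unique.\<close>

lemma AE_ranks_permutes: "AE \<omega> in block_space G n. snd \<omega> permutes {1..n}"
proof -
  interpret pair_sigma_finite samples ranks
    by (intro pair_sigma_finite.intro prob_space_imp_sigma_finite prob_space_samples
        prob_space_measure_pmf)
  have "{\<omega> \<in> space (samples \<Otimes>\<^sub>M ranks). snd \<omega> permutes {1..n}}
      = space samples \<times> {\<sigma>. \<sigma> permutes {1..n}}"
    by (auto simp: space_pair_measure)
  then have "{\<omega> \<in> space (samples \<Otimes>\<^sub>M ranks). snd \<omega> permutes {1..n}} \<in> sets (samples \<Otimes>\<^sub>M ranks)"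
    by simp
  moreover have "AE S in samples. AE \<sigma> in ranks. snd (S, \<sigma>) permutes {1..n}"
    unfolding AE_measure_pmf_iff
      set_pmf_of_set[OF permutations_atLeastAtMost_nonempty finite_permutations_atLeastAtMost]
    by simp
  ultimately show ?thesis
    unfolding block_space_eq by (rule AE_pair_measure)
qed

lemma prob_cell_event_permute:
  assumes "\<pi> permutes {1..n}"
  shows "measure (block_space G n) (cell_event {i}) = measure (block_space G n) (cell_event {\<pi> i})"
proof -
  note meas = measurable_permute_block[OF assms]
  have "measure (block_space G n) (cell_event {i})
      = measure (distr (block_space G n) (block_space G n) (permute_block \<pi>)) (cell_event {i})"
    by (simp only: distr_permute_block[OF assms])
  also have "\<dots> = measure (block_space G n)
      (permute_block \<pi> -` cell_event {i} \<inter> space (block_space G n))"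
    by (rule measure_distr[OF meas sets_cell_event])
  also have "\<dots> = measure (block_space G n) (cell_event {\<pi> i})"
  proof (rule measure_eq_AE)
    show "AE \<omega> in block_space G n.
        \<omega> \<in> permute_block \<pi> -` cell_event {i} \<inter> space (block_space G n) \<longleftrightarrow> \<omega> \<in> cell_event {\<pi> i}"
      using AE_ranks_permutes
    proof eventually_elim
      case (elim \<omega>)
      have reindex: "\<pi> (cell (permute_block \<pi> \<omega>)) = cell \<omega>"
        using vd_index_reindex[OF n_pos permutes_inj_on[OF elim] assms] by simp
      have iff: "cell (permute_block \<pi> \<omega>) = i \<longleftrightarrow> cell \<omega> = \<pi> i"
        unfolding reindex[symmetric] by (rule inj_eq[OF permutes_inj[OF assms], symmetric])
      have "\<omega> \<in> space (block_space G n) \<Longrightarrow> permute_block \<pi> \<omega> \<in> space (block_space G n)"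
        by (rule measurable_space[OF meas])
      then show ?case
        using iff by (simp only: vimage_eq Int_iff mem_Collect_eq singleton_iff) blast
    qed
  qed (rule measurable_sets[OF meas sets_cell_event], rule sets_cell_event)
  finally show ?thesis .
qed

lemma prob_cell_event_sum:
  "measure (block_space G n) (cell_event B)
    = (\<Sum>i\<in>B \<inter> {1..n}. measure (block_space G n) (cell_event {i}))"
proof -
  interpret prob_space "block_space G n" by (rule prob_space_block_space)
  have "measure (block_space G n) (cell_event B)
      = measure (block_space G n) (\<Union>i\<in>B \<inter> {1..n}. cell_event {i})"
  proof (rule measure_eq_AE)
    show "AE \<omega> in block_space G n. \<omega> \<in> cell_event B \<longleftrightarrow> \<omega> \<in> (\<Union>i\<in>B \<inter> {1..n}. cell_event {i})"
      using AE_ranks_permutes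
    proof eventually_elim
      case (elim \<omega>)
      then show ?case using vd_index_in[OF n_pos permutes_inj_on[OF elim]] by auto
    qed
    show "cell_event B \<in> sets (block_space G n)" by (rule sets_cell_event)
    show "(\<Union>i\<in>B \<inter> {1..n}. cell_event {i}) \<in> sets (block_space G n)"
    proof (rule sets.finite_UN)
      fix i show "cell_event {i} \<in> sets (block_space G n)" by (rule sets_cell_event)
    qed simp
  qed
  also have "\<dots> = (\<Sum>i\<in>B \<inter> {1..n}. measure (block_space G n) (cell_event {i}))"
  proof (rule finite_measure_finite_Union)
    show "(\<lambda>i. cell_event {i}) ` (B \<inter> {1..n}) \<subseteq> events" using sets_cell_event by blast
  qed (auto simp: disjoint_family_on_def)
  finally show ?thesis .
qed

lemma prob_cell_event_singleton:
  assumes "i \<in> {1..n}"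
  shows "measure (block_space G n) (cell_event {i}) = 1 / n"
proof -
  have same:
    "measure (block_space G n) (cell_event {k}) = measure (block_space G n) (cell_event {1})"
    if "k \<in> {1..n}" for k
    using prob_cell_event_permute[OF permutes_swap_id[of k "{1..n}" 1], of k] that n_pos by simp
  have "1 = measure (block_space G n) (cell_event UNIV)"
    using prob_space.prob_space[OF prob_space_block_space] by simp
  also have "\<dots> = (\<Sum>k\<in>{1..n}. measure (block_space G n) (cell_event {k}))"
    using prob_cell_event_sum[of UNIV] by simp
  also have "\<dots> = (\<Sum>k\<in>{1..n}. measure (block_space G n) (cell_event {1}))"
    by (rule sum.cong[OF refl same])
  also have "\<dots> = n * measure (block_space G n) (cell_event {1})"
    by simp
  finally show ?thesis using same[OF assms] n_pos by (simp add: field_simps)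
qed

lemma prob_cell_event:
  "measure (block_space G n) (cell_event B) = card (B \<inter> {1..n}) / n"
proof -
  have "(\<Sum>i\<in>B \<inter> {1..n}. measure (block_space G n) (cell_event {i})) = (\<Sum>i\<in>B \<inter> {1..n}. 1 / n)"
    by (rule sum.cong[OF refl prob_cell_event_singleton]) simp
  then show ?thesis by (simp add: prob_cell_event_sum)
qed

end

section \<open>Independence of the code bits\<close>

lemma (in product_prob_space) measure_PiM_Collect:
  assumes "J \<subseteq> I" "finite J" "\<And>i. i \<in> J \<Longrightarrow> X i \<in> sets (M i)"
  shows "measure (Pi\<^sub>M I M) {x\<in>space (Pi\<^sub>M I M). \<forall>i\<in>J. x i \<in> X i} = (\<Prod>i\<in>J. measure (M i) (X i))"
  using emeasure_PiM_Collect[OF assms]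
  by (simp add: emeasure_eq_measure M.emeasure_eq_measure prod_ennreal prod_nonneg)

definition vdeh_cell ::
    "nat \<Rightarrow> 'a::metric_space \<Rightarrow> (nat \<Rightarrow> (nat \<Rightarrow> 'a) \<times> (nat \<Rightarrow> nat)) \<Rightarrow> nat \<Rightarrow> nat" where
  "vdeh_cell w x \<omega> t = vd_index (2 ^ w) x (fst (\<omega> t)) (snd (\<omega> t))"

lemma prob_vdeh_cells:
  fixes G :: "'a::{second_countable_topology, metric_space} measure" and w T :: nat
  assumes "prob_space G" "sets G = sets borel" "J \<subseteq> {..<T}"
  shows "measure (vdeh_space G w T) {\<omega> \<in> space (vdeh_space G w T).
           \<forall>t\<in>J. vdeh_cell w x \<omega> t \<in> B t}
       = (\<Prod>t\<in>J. card (B t \<inter> {1..2 ^ w}) / 2 ^ w)"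
proof -
  interpret voronoi_block G "2 ^ w" x
    by (rule voronoi_block.intro[OF assms(1,2)]) simp
  interpret product_prob_space "\<lambda>_. block_space G (2 ^ w)" "{..<T}"
    by (intro product_prob_spaceI prob_space_block_space)
  have "{\<omega> \<in> space (vdeh_space G w T). \<forall>t\<in>J. vdeh_cell w x \<omega> t \<in> B t}
      = {\<omega> \<in> space (vdeh_space G w T). \<forall>t\<in>J. \<omega> t \<in> cell_event (B t)}"
    using assms(3) by (auto simp: vdeh_space_def space_PiM vdeh_cell_def)
  then show ?thesis
    using measure_PiM_Collect[OF assms(3) finite_subset[OF assms(3)] sets_cell_event]
    by (simp add: vdeh_space_def prob_cell_event)
qed

lemma all_less_mult_iff:
  fixes T w :: nat
  shows "(\<forall>l < T * w. P l) \<longleftrightarrow> (\<forall>t<T. \<forall>j<w. P (t * w + j))"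
proof
  assume "\<forall>l < T * w. P l"
  moreover have "t * w + j < T * w" if "t < T" "j < w" for t j :: nat
  proof -
    have "t * w + j < Suc t * w" using that(2) by simp
    also have "\<dots> \<le> T * w" using that(1) by (intro mult_le_mono1) simp
    finally show ?thesis .
  qed
  ultimately show "\<forall>t<T. \<forall>j<w. P (t * w + j)" by blast
next
  assume blocks: "\<forall>t<T. \<forall>j<w. P (t * w + j)"
  show "\<forall>l < T * w. P l"
  proof (intro allI impI)
    fix l assume "l < T * w"
    then have "0 < w" by (cases w) auto
    with \<open>l < T * w\<close> have "l div w < T" "l mod w < w"
      by (simp_all add: div_less_iff_less_mult)
    then have "P (l div w * w + l mod w)" using blocks by blast
    then show "P l" by simp
  qed
qed

lemma vdeh_bit_block:
  "j < w \<Longrightarrow> vdeh_bit w x \<omega> (t * w + j) = enc_bit (vdeh_cell w x \<omega> t) (Suc j)"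
  by (simp add: vdeh_bit_def vdeh_cell_def)

lemma prob_vdeh_code:
  fixes G :: "'a::{second_countable_topology, metric_space} measure"
  assumes "prob_space G" "sets G = sets borel" "\<forall>l < T * w. v l \<in> {0, 1}"
  shows "measure (vdeh_space G w T)
      {\<omega> \<in> space (vdeh_space G w T). \<forall>l < T * w. vdeh_bit w x \<omega> l = v l} = (1 / 2) ^ (T * w)"
proof -
  let ?B = "\<lambda>t. {i. \<forall>j\<in>{..<w}. enc_bit i (Suc j) = v (t * w + j)}"
  have "{\<omega> \<in> space (vdeh_space G w T). \<forall>l < T * w. vdeh_bit w x \<omega> l = v l}
      = {\<omega> \<in> space (vdeh_space G w T). \<forall>t\<in>{..<T}. vdeh_cell w x \<omega> t \<in> ?B t}"
    by (simp add: all_less_mult_iff vdeh_bit_block Ball_def)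
  moreover have "card (?B t \<inter> {1..2 ^ w}) = 1" if "t < T" for t
  proof -
    have "?B t \<inter> {1..2 ^ w} = {i \<in> {1..2 ^ w}. \<forall>j\<in>{..<w}. enc_bit i (Suc j) = v (t * w + j)}"
      by blast
    moreover have "\<forall>j\<in>{..<w}. v (t * w + j) \<in> {0, 1}"
      using assms(3) that by (simp add: all_less_mult_iff)
    ultimately show ?thesis
      using card_enc_bits_fixed[of "{..<w}" w "\<lambda>j. v (t * w + j)"] by simp
  qed
  ultimately have "measure (vdeh_space G w T)
      {\<omega> \<in> space (vdeh_space G w T). \<forall>l < T * w. vdeh_bit w x \<omega> l = v l} = (\<Prod>t<T. 1 / 2 ^ w)"
    using prob_vdeh_cells[OF assms(1,2) order_refl, where x = x and B = ?B] by simp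
  also have "\<dots> = (1 / 2) ^ (T * w)"
    by (simp add: power_mult mult.commute[of T] power_one_over)
  finally show ?thesis .
qed

lemma prob_vdeh_bit:
  fixes G :: "'a::{second_countable_topology, metric_space} measure"
  assumes "prob_space G" "sets G = sets borel" "l < T * w" "c \<in> {0, 1}"
  shows "measure (vdeh_space G w T) {\<omega> \<in> space (vdeh_space G w T). vdeh_bit w x \<omega> l = c} = 1 / 2"
proof -
  let ?B = "\<lambda>_. {i. \<forall>j\<in>{l mod w}. enc_bit i (Suc j) = c}"
  obtain k where w: "w = Suc k" using assms(3) by (cases w) auto
  then have block: "l div w < T" using assms(3) by (simp add: div_less_iff_less_mult)
  have "{\<omega> \<in> space (vdeh_space G w T). vdeh_bit w x \<omega> l = c}
      = {\<omega> \<in> space (vdeh_space G w T). \<forall>t\<in>{l div w}. vdeh_cell w x \<omega> t \<in> ?B t}"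
    by (simp add: vdeh_bit_def vdeh_cell_def)
  moreover have "?B t \<inter> {1..2 ^ w} = {i \<in> {1..2 ^ w}. \<forall>j\<in>{l mod w}. enc_bit i (Suc j) = c}" for t
    by blast
  moreover have "card {i \<in> {1..2 ^ w}. \<forall>j\<in>{l mod w}. enc_bit i (Suc j) = c} = 2 ^ k"
    using card_enc_bits_fixed[of "{l mod w}" w "\<lambda>_. c"] assms(4) w by simp
  ultimately show ?thesis
    using prob_vdeh_cells[OF assms(1,2), where J = "{l div w}" and w = w and T = T and x = x
        and B = ?B] block
    by (simp add: w)
qed

theorem theorem1:
  fixes G :: "(real ^ 'd) measure" and w T :: nat and x :: "real ^ 'd"
    and v :: "nat \<Rightarrow> nat"
  assumes "prob_space G" and "sets G = sets borel"
    and "w \<ge> 1" and "T \<ge> 1"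
    and "\<forall>l < T * w. v l \<in> {0, 1}"
  shows "measure (vdeh_space G w T)
           {\<omega> \<in> space (vdeh_space G w T). \<forall>l < T * w. vdeh_bit w x \<omega> l = v l}
         = (\<Prod>l < T * w. measure (vdeh_space G w T)
              {\<omega> \<in> space (vdeh_space G w T). vdeh_bit w x \<omega> l = v l})"
proof -
  have "measure (vdeh_space G w T)
      {\<omega> \<in> space (vdeh_space G w T). \<forall>l < T * w. vdeh_bit w x \<omega> l = v l} = (\<Prod>l < T * w. 1 / 2)"
    using prob_vdeh_code[OF assms(1,2,5)] by simp
  also have "\<dots> = (\<Prod>l < T * w. measure (vdeh_space G w T)
      {\<omega> \<in> space (vdeh_space G w T). vdeh_bit w x \<omega> l = v l})"
    using prob_vdeh_bit[OF assms(1,2)] assms(5) by (intro prod.cong) simp_all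
  finally show ?thesis .
qed

end
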